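(* Let $H$ be a 5-vertex 3-graph which is $C_5$-free and $J_4$-free, contains a copy of $K_4^3$, and has complete shadow graph. Then $H$ is isomorphic to the 3-graph $H_4$ with vertex set $[5]$ and edges $123,234,134,124,514,523$.
   Context: A 3-graph is a 3-uniform hypergraph. $K_4^3$ is the complete 3-graph on 4 vertices (edges $123,124,134,234$); $C_5$ has vertex set $[5]$ and edges $123,234,345,145,125$; $J_4$ has vertex set $[5]$ and edges $123,124,125,134,135,145$. $H$ is $F$-free if it has no (not necessarily induced) subhypergraph isomorphic to $F$. The shadow graph of $H$ is the graph on $V(H)$ in which a pair is an edge iff it is contained in some edge of $H$; it is complete if every pair of vertices is such an edge. *)

theory Defs
  imports Main
begin

definition is_3graph :: "'a set \<Rightarrow> 'a set set \<Rightarrow> bool" where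
  "is_3graph V E \<longleftrightarrow> finite V \<and> (\<forall>e\<in>E. e \<subseteq> V \<and> card e = 3)"

definition contains_copy :: "'a set \<Rightarrow> 'a set set \<Rightarrow> 'b set \<Rightarrow> 'b set set \<Rightarrow> bool" where
  "contains_copy V E FV FE \<longleftrightarrow>
     (\<exists>f. inj_on f FV \<and> f ` FV \<subseteq> V \<and> (\<forall>e\<in>FE. f ` e \<in> E))"

definition free_of :: "'a set \<Rightarrow> 'a set set \<Rightarrow> 'b set \<Rightarrow> 'b set set \<Rightarrow> bool" where
  "free_of V E FV FE \<longleftrightarrow> \<not> contains_copy V E FV FE"

definition K43_V :: "nat set" where "K43_V = {1,2,3,4}"
definition K43_E :: "nat set set" where
  "K43_E = {{1,2,3},{1,2,4},{1,3,4},{2,3,4}}"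

definition C5_V :: "nat set" where "C5_V = {1..5}"
definition C5_E :: "nat set set" where
  "C5_E = {{1,2,3},{2,3,4},{3,4,5},{1,4,5},{1,2,5}}"

definition J4_V :: "nat set" where "J4_V = {1..5}"
definition J4_E :: "nat set set" where
  "J4_E = {{1,2,3},{1,2,4},{1,2,5},{1,3,4},{1,3,5},{1,4,5}}"

definition H4_V :: "nat set" where "H4_V = {1..5}"
definition H4_E :: "nat set set" where
  "H4_E = {{1,2,3},{2,3,4},{1,3,4},{1,2,4},{5,1,4},{5,2,3}}"

definition complete_shadow :: "'a set \<Rightarrow> 'a set set \<Rightarrow> bool" where
  "complete_shadow V E \<longleftrightarrow> (\<forall>x\<in>V. \<forall>y\<in>V. x \<noteq> y \<longrightarrow> (\<exists>e\<in>E. {x, y} \<subseteq> e))"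

definition hg_isomorphic :: "'a set \<Rightarrow> 'a set set \<Rightarrow> 'b set \<Rightarrow> 'b set set \<Rightarrow> bool" where
  "hg_isomorphic V E V' E' \<longleftrightarrow>
     (\<exists>f. bij_betw f V V' \<and> (\<forall>e. e \<subseteq> V \<longrightarrow> (e \<in> E \<longleftrightarrow> f ` e \<in> E')))"

end

theory Submission
  imports Defs
begin

(*
  Let a, b, c, d span the copy of K4 and let v be the fifth vertex. Every edge of H is either
  a triple of the K4 or consists of v and a pair from the link graph of v on {a, b, c, d}, so H is
  determined by this link graph. Because the shadow is complete, no vertex is isolated in the link;
  a vertex of link degree three would be the centre of a J4; and a path p q r s in the link closes
  up, with the K4 triples q p s and p s r, into a C5. The only graph on four vertices with these
  three properties is a perfect matching, and K4 together with v joined to a perfect matching is H4.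
*)

lemma contains_copy_by_list:
  assumes "distinct xs" "set xs \<subseteq> V" "FV = {1..length xs}"
    and "\<forall>e\<in>FE. (\<lambda>i. xs ! (i - 1)) ` e \<in> E"
  shows "contains_copy V E FV FE"
  unfolding contains_copy_def
proof (intro exI conjI)
  show "inj_on (\<lambda>i. xs ! (i - 1)) FV"
    using assms(1,3) by (auto simp: inj_on_def nth_eq_iff_index_eq)
  show "(\<lambda>i. xs ! (i - 1)) ` FV \<subseteq> V"
    using assms(2,3) by (auto intro!: subsetD[OF _ nth_mem])
qed (use assms(4) in blast)

lemma J4_copyI:
  assumes "distinct [x,y,z,w,u]" "{x,y,z,w,u} \<subseteq> V"
    and "{x,y,z} \<in> E" "{x,y,w} \<in> E" "{x,y,u} \<in> E" "{x,z,w} \<in> E" "{x,z,u} \<in> E" "{x,w,u} \<in> E"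
  shows "contains_copy V E J4_V J4_E"
  by (rule contains_copy_by_list[of "[x,y,z,w,u]"]) (use assms in \<open>auto simp: J4_V_def J4_E_def\<close>)

lemma C5_copyI:
  assumes "distinct [x1,x2,x3,x4,x5]" "{x1,x2,x3,x4,x5} \<subseteq> V"
    and "{x1,x2,x3} \<in> E" "{x2,x3,x4} \<in> E" "{x3,x4,x5} \<in> E" "{x1,x4,x5} \<in> E" "{x1,x2,x5} \<in> E"
  shows "contains_copy V E C5_V C5_E"
  by (rule contains_copy_by_list[of "[x1,x2,x3,x4,x5]"]) (use assms in \<open>auto simp: C5_V_def C5_E_def\<close>)

lemma triples_of_four:
  assumes "distinct [a,b,c,d]"
  shows "{e. e \<subseteq> {a,b,c,d} \<and> card e = 3} = {{a,b,c},{a,b,d},{a,c,d},{b,c,d}}"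
proof (intro equalityI subsetI)
  fix e assume "e \<in> {e. e \<subseteq> {a,b,c,d} \<and> card e = 3}"
  then have sub: "e \<subseteq> {a,b,c,d}" and card: "card e = 3" by auto
  have "card ({a,b,c,d} - e) = 1"
    using assms card sub by (simp add: card_Diff_subset finite_subset)
  then obtain x where x: "{a,b,c,d} - e = {x}" by (rule card_1_singletonE)
  then have "e = {a,b,c,d} - {x}" "x \<in> {a,b,c,d}" using sub by auto
  then show "e \<in> {{a,b,c},{a,b,d},{a,c,d},{b,c,d}}" using assms by (auto simp: insert_commute)
qed (use assms in auto)

lemma pairs_of_four:
  assumes "p \<subseteq> {a,b,c,d}" "card p = 2"
  shows "p \<in> {{a,b},{a,c},{a,d},{b,c},{b,d},{c,d}}"
proof -
  obtain x y where p: "p = {x,y}" "x \<noteq> y" using assms(2) by (rule card_2_iff[THEN iffD1, elim_format]) blast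
  have "x \<in> {a,b,c,d}" "y \<in> {a,b,c,d}" using assms(1) p(1) by auto
  then show ?thesis
    unfolding p(1) using p(2) by (elim insertE emptyE) (simp_all add: insert_commute)
qed

lemma perfect_matching_of_four_vertices:
  assumes dist: "distinct [a,b,c,d]"
    and pairs: "\<And>p. p \<in> G \<Longrightarrow> p \<subseteq> {a,b,c,d} \<and> card p = 2"
    and cover: "\<And>x. x \<in> {a,b,c,d} \<Longrightarrow> \<exists>p\<in>G. x \<in> p"
    and claw_free: "\<And>x y z w. distinct [x,y,z,w] \<Longrightarrow> {x,y,z,w} \<subseteq> {a,b,c,d} \<Longrightarrow>
      \<not> ({x,y} \<in> G \<and> {x,z} \<in> G \<and> {x,w} \<in> G)"
    and P4_free: "\<And>p q r s. distinct [p,q,r,s] \<Longrightarrow> {p,q,r,s} \<subseteq> {a,b,c,d} \<Longrightarrow>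
      \<not> ({p,q} \<in> G \<and> {q,r} \<in> G \<and> {r,s} \<in> G)"
  shows "G = {{a,b},{c,d}} \<or> G = {{a,c},{b,d}} \<or> G = {{a,d},{b,c}}"
proof -
  have six: "G \<subseteq> {{a,b},{a,c},{a,d},{b,c},{b,d},{c,d}}"
  proof
    fix p assume "p \<in> G"
    with pairs have "p \<subseteq> {a,b,c,d}" "card p = 2" by simp_all
    then show "p \<in> {{a,b},{a,c},{a,d},{b,c},{b,d},{c,d}}" by (rule pairs_of_four)
  qed
  have covered: "{a,b} \<in> G \<or> {a,c} \<in> G \<or> {a,d} \<in> G" "{a,b} \<in> G \<or> {b,c} \<in> G \<or> {b,d} \<in> G"
    "{a,c} \<in> G \<or> {b,c} \<in> G \<or> {c,d} \<in> G" "{a,d} \<in> G \<or> {b,d} \<in> G \<or> {c,d} \<in> G"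
    using cover[of a] cover[of b] cover[of c] cover[of d] six dist by auto
  have claws: "\<not> ({a,b} \<in> G \<and> {a,c} \<in> G \<and> {a,d} \<in> G)" "\<not> ({b,a} \<in> G \<and> {b,c} \<in> G \<and> {b,d} \<in> G)"
    "\<not> ({c,a} \<in> G \<and> {c,b} \<in> G \<and> {c,d} \<in> G)" "\<not> ({d,a} \<in> G \<and> {d,b} \<in> G \<and> {d,c} \<in> G)"
    by (rule claw_free; use dist in auto)+
  have paths:
    "\<not> ({a,b} \<in> G \<and> {b,c} \<in> G \<and> {c,d} \<in> G)" "\<not> ({a,b} \<in> G \<and> {b,d} \<in> G \<and> {d,c} \<in> G)"
    "\<not> ({a,c} \<in> G \<and> {c,b} \<in> G \<and> {b,d} \<in> G)" "\<not> ({a,c} \<in> G \<and> {c,d} \<in> G \<and> {d,b} \<in> G)"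
    "\<not> ({a,d} \<in> G \<and> {d,b} \<in> G \<and> {b,c} \<in> G)" "\<not> ({a,d} \<in> G \<and> {d,c} \<in> G \<and> {c,b} \<in> G)"
    "\<not> ({b,a} \<in> G \<and> {a,c} \<in> G \<and> {c,d} \<in> G)" "\<not> ({b,a} \<in> G \<and> {a,d} \<in> G \<and> {d,c} \<in> G)"
    "\<not> ({b,c} \<in> G \<and> {c,a} \<in> G \<and> {a,d} \<in> G)" "\<not> ({b,d} \<in> G \<and> {d,a} \<in> G \<and> {a,c} \<in> G)"
    "\<not> ({c,a} \<in> G \<and> {a,b} \<in> G \<and> {b,d} \<in> G)" "\<not> ({c,b} \<in> G \<and> {b,a} \<in> G \<and> {a,d} \<in> G)"
    by (rule P4_free; use dist in auto)+
  have "({a,b} \<in> G \<and> {c,d} \<in> G \<and> {a,c} \<notin> G \<and> {a,d} \<notin> G \<and> {b,c} \<notin> G \<and> {b,d} \<notin> G) \<or>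
        ({a,c} \<in> G \<and> {b,d} \<in> G \<and> {a,b} \<notin> G \<and> {a,d} \<notin> G \<and> {b,c} \<notin> G \<and> {c,d} \<notin> G) \<or>
        ({a,d} \<in> G \<and> {b,c} \<in> G \<and> {a,b} \<notin> G \<and> {a,c} \<notin> G \<and> {b,d} \<notin> G \<and> {c,d} \<notin> G)"
    \<comment> \<open>normalising with \<open>insert_commute\<close> identifies \<open>{x,y}\<close> with \<open>{y,x}\<close>,
        after which the claim is propositional in the six pairs\<close>
    using covered claws paths by (simp only: insert_commute) argo
  moreover have G_eq_pair: "G = {P, Q}"
    if PQ: "P \<in> G" "Q \<in> G"
      and only: "\<forall>R\<in>{{a,b},{a,c},{a,d},{b,c},{b,d},{c,d}}. R \<in> G \<longrightarrow> R = P \<or> R = Q" for P Q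
  proof (intro equalityI subsetI)
    fix R assume "R \<in> G"
    with bspec[OF only subsetD[OF six \<open>R \<in> G\<close>]] show "R \<in> {P, Q}" by simp
  qed (use PQ in blast)
  ultimately show ?thesis
    using G_eq_pair[of "{a,b}" "{c,d}"] G_eq_pair[of "{a,c}" "{b,d}"] G_eq_pair[of "{a,d}" "{b,c}"]
    by (elim disjE) simp_all
qed

definition link :: "'a set set \<Rightarrow> 'a \<Rightarrow> 'a set set" where
  "link E v = (\<lambda>e. e - {v}) ` {e \<in> E. v \<in> e}"

lemma Diff_mem_linkI: "e \<in> E \<Longrightarrow> v \<in> e \<Longrightarrow> e - {v} \<in> link E v"
  unfolding link_def by blast

lemma mem_linkE:
  assumes "p \<in> link E v"
  obtains e where "e \<in> E" "v \<in> e" "p = e - {v}"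
  using assms unfolding link_def by blast

lemma mem_link_iff:
  assumes "v \<notin> p"
  shows "p \<in> link E v \<longleftrightarrow> insert v p \<in> E"
proof
  assume "p \<in> link E v"
  then obtain e where "e \<in> E" "v \<in> e" "p = e - {v}" by (rule mem_linkE)
  then show "insert v p \<in> E" by (simp add: insert_absorb)
next
  assume "insert v p \<in> E"
  then have "insert v p - {v} \<in> link E v" by (rule Diff_mem_linkI) simp
  then show "p \<in> link E v" using assms by simp
qed

lemma link_pairs:
  assumes "is_3graph V E" "V \<subseteq> insert v W" "p \<in> link E v"
  shows "p \<subseteq> W \<and> card p = 2"
proof -
  obtain e where "e \<in> E" "v \<in> e" "p = e - {v}" using assms(3) by (rule mem_linkE)
  moreover have "e \<subseteq> V" "card e = 3" using assms(1) \<open>e \<in> E\<close> by (auto simp: is_3graph_def)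
  ultimately show ?thesis using assms(2) by (auto simp: card_Diff_singleton_if)
qed

lemma complete_shadow_link_cover:
  assumes "complete_shadow V E" "v \<in> V" "x \<in> V" "x \<noteq> v"
  shows "\<exists>p\<in>link E v. x \<in> p"
proof -
  obtain e where "e \<in> E" "{x, v} \<subseteq> e"
    using assms(1)[unfolded complete_shadow_def, rule_format, OF assms(3,2,4)] by blast
  then have "x \<in> e - {v}" "e - {v} \<in> link E v" using assms(4) by (simp_all add: Diff_mem_linkI)
  then show ?thesis by (rule bexI)
qed

lemma edges_eq_triples_un_link:
  assumes "is_3graph V E" "V = insert v W" "v \<notin> W" "{e. e \<subseteq> W \<and> card e = 3} \<subseteq> E"
  shows "E = {e. e \<subseteq> W \<and> card e = 3} \<union> insert v ` link E v"
proof (intro equalityI subsetI)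
  fix e assume "e \<in> E"
  show "e \<in> {e. e \<subseteq> W \<and> card e = 3} \<union> insert v ` link E v"
  proof (cases "v \<in> e")
    case True
    have "e = insert v (e - {v})" using True by blast
    moreover have "e - {v} \<in> link E v" using \<open>e \<in> E\<close> True by (rule Diff_mem_linkI)
    ultimately have "e \<in> insert v ` link E v" by (rule image_eqI)
    then show ?thesis by (rule UnI2)
  next
    case False
    then have "e \<subseteq> W" "card e = 3" using \<open>e \<in> E\<close> assms(1,2) by (auto simp: is_3graph_def)
    then show ?thesis by simp
  qed
next
  fix e assume "e \<in> {e. e \<subseteq> W \<and> card e = 3} \<union> insert v ` link E v"
  then show "e \<in> E"
  proof
    assume "e \<in> {e. e \<subseteq> W \<and> card e = 3}"
    then show ?thesis using assms(4) by blast
  next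
    assume "e \<in> insert v ` link E v"
    then obtain p where "e = insert v p" "p \<in> link E v" by (rule imageE)
    from \<open>p \<in> link E v\<close> obtain e' where "e' \<in> E" "v \<in> e'" "p = e' - {v}" by (rule mem_linkE)
    then show ?thesis using \<open>e = insert v p\<close> by (simp add: insert_absorb)
  qed
qed

lemma J4_free_link_claw_free:
  assumes "free_of V E J4_V J4_E" "insert v W \<subseteq> V" "v \<notin> W"
    and "{e. e \<subseteq> W \<and> card e = 3} \<subseteq> E"
    and "distinct [x,y,z,w]" "{x,y,z,w} \<subseteq> W"
  shows "\<not> ({x,y} \<in> link E v \<and> {x,z} \<in> link E v \<and> {x,w} \<in> link E v)"
proof
  have "v \<notin> {x,y,z,w}" using assms(3,6) by blast
  then have dist: "distinct [x,y,z,w,v]" using assms(5) by auto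
  have sub: "{x,y,z,w,v} \<subseteq> V" using assms(2,6) by blast
  have triple: "e \<in> E" if "e \<subseteq> W" "card e = 3" for e using assms(4) that by blast
  have xyz: "{x,y,z} \<in> E" and xyw: "{x,y,w} \<in> E" and xzw: "{x,z,w} \<in> E"
    using assms(5,6) by (auto intro!: triple)
  assume "{x,y} \<in> link E v \<and> {x,z} \<in> link E v \<and> {x,w} \<in> link E v"
  then have xyv: "{x,y,v} \<in> E" and xzv: "{x,z,v} \<in> E" and xwv: "{x,w,v} \<in> E"
    using \<open>v \<notin> {x,y,z,w}\<close> by (simp_all add: mem_link_iff insert_commute)
  have "contains_copy V E J4_V J4_E" by (rule J4_copyI[OF dist sub xyz xyw xyv xzw xzv xwv])
  then show False using assms(1) by (simp add: free_of_def)
qed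

lemma C5_free_link_P4_free:
  assumes "free_of V E C5_V C5_E" "insert v W \<subseteq> V" "v \<notin> W"
    and "{e. e \<subseteq> W \<and> card e = 3} \<subseteq> E"
    and "distinct [p,q,r,s]" "{p,q,r,s} \<subseteq> W"
  shows "\<not> ({p,q} \<in> link E v \<and> {q,r} \<in> link E v \<and> {r,s} \<in> link E v)"
proof
  have "v \<notin> {p,q,r,s}" using assms(3,6) by blast
  then have dist: "distinct [v,q,p,s,r]" using assms(5) by auto
  have sub: "{v,q,p,s,r} \<subseteq> V" using assms(2,6) by blast
  have triple: "e \<in> E" if "e \<subseteq> W" "card e = 3" for e using assms(4) that by blast
  have qps: "{q,p,s} \<in> E" and psr: "{p,s,r} \<in> E"
    using assms(5,6) by (auto intro!: triple)
  assume "{p,q} \<in> link E v \<and> {q,r} \<in> link E v \<and> {r,s} \<in> link E v"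
  then have vqp: "{v,q,p} \<in> E" and vqr: "{v,q,r} \<in> E" and vsr: "{v,s,r} \<in> E"
    using \<open>v \<notin> {p,q,r,s}\<close> by (simp_all add: mem_link_iff insert_commute)
  have "contains_copy V E C5_V C5_E" by (rule C5_copyI[OF dist sub vqp qps psr vsr vqr])
  then show False using assms(1) by (simp add: free_of_def)
qed

lemma hg_isomorphic_image:
  assumes "bij_betw g V V'" "E \<subseteq> Pow V"
  shows "hg_isomorphic V E V' (image g ` E)"
proof -
  have "inj_on (image g) (Pow V)"
    using assms(1) by (intro inj_on_image_Pow) (rule bij_betw_imp_inj_on)
  then have "e \<in> E \<longleftrightarrow> g ` e \<in> image g ` E" if "e \<subseteq> V" for e
    using that assms(2) by (simp add: inj_on_image_mem_iff)
  then show ?thesis using assms(1) unfolding hg_isomorphic_def by blast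
qed

lemma K4_plus_matching_iso_H4:
  assumes "distinct [a,b,c,d,v]"
  shows "hg_isomorphic {a,b,c,d,v} ({e. e \<subseteq> {a,b,c,d} \<and> card e = 3} \<union> insert v ` {{a,b},{c,d}})
    H4_V H4_E"
proof -
  define g :: "_ \<Rightarrow> nat" where
    "g x = (if x = a then 1 else if x = b then 4 else if x = c then 2 else if x = d then 3 else 5)" for x
  have g: "g a = 1" "g b = 4" "g c = 2" "g d = 3" "g v = 5" using assms by (auto simp: g_def)
  let ?E = "{{a,b,c},{a,b,d},{a,c,d},{b,c,d},{v,a,b},{v,c,d}}"
  have E: "{e. e \<subseteq> {a,b,c,d} \<and> card e = 3} \<union> insert v ` {{a,b},{c,d}} = ?E"
    using assms by (simp add: triples_of_four insert_commute)
  have H4: "H4_E = image g ` ?E" by (simp add: g H4_E_def insert_commute)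
  have "bij_betw g {a,b,c,d,v} H4_V"
    using assms by (auto simp: bij_betw_def inj_on_def g H4_V_def)
  moreover have "?E \<subseteq> Pow {a,b,c,d,v}" by auto
  ultimately show ?thesis unfolding E H4 by (rule hg_isomorphic_image)
qed

lemma K4_copy_in_five_vertices:
  assumes "finite V" "card V = 5" "contains_copy V E K43_V K43_E"
  obtains a b c d v where "distinct [a,b,c,d,v]" "V = {a,b,c,d,v}"
    "{e. e \<subseteq> {a,b,c,d} \<and> card e = 3} \<subseteq> E"
proof -
  obtain f where f: "inj_on f K43_V" "f ` K43_V \<subseteq> V" "\<forall>e\<in>K43_E. f ` e \<in> E"
    using assms(3) unfolding contains_copy_def by blast
  let ?W = "{f 1, f 2, f 3, f 4}"
  have dist: "distinct [f 1, f 2, f 3, f 4]" using f(1) by (simp add: K43_V_def)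
  have "?W \<subseteq> V" using f(2) by (simp add: K43_V_def)
  then have "card (V - ?W) = 1" using dist assms(2) by (simp add: card_Diff_subset)
  then obtain v where v: "V - ?W = {v}" by (rule card_1_singletonE)
  then have "v \<notin> ?W" by blast
  then have "distinct [f 1, f 2, f 3, f 4, v]" using dist by auto
  moreover have "V = {f 1, f 2, f 3, f 4, v}" using v \<open>?W \<subseteq> V\<close> by blast
  moreover have "{e. e \<subseteq> ?W \<and> card e = 3} \<subseteq> E"
    using f(3) unfolding triples_of_four[OF dist] by (simp add: K43_E_def)
  ultimately show thesis by (rule that)
qed

theorem lemma2p14:
  fixes V :: "'a set" and E :: "'a set set"
  assumes "is_3graph V E"
    and "card V = 5"
    and "free_of V E C5_V C5_E"
    and "free_of V E J4_V J4_E"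
    and "contains_copy V E K43_V K43_E"
    and "complete_shadow V E"
  shows "hg_isomorphic V E H4_V H4_E"
proof -
  have "finite V" using assms(1) by (simp add: is_3graph_def)
  then obtain a b c d v where dist: "distinct [a,b,c,d,v]" and V: "V = {a,b,c,d,v}"
    and K4: "{e. e \<subseteq> {a,b,c,d} \<and> card e = 3} \<subseteq> E"
    using assms(2,5) by (rule K4_copy_in_five_vertices)
  let ?W = "{a,b,c,d}"
  have W: "V = insert v ?W" "v \<notin> ?W" using V dist by auto
  have cover: "\<exists>p\<in>link E v. x \<in> p" if "x \<in> ?W" for x
    using complete_shadow_link_cover[OF assms(6)] that W by auto
  have "distinct [a,b,c,d]" using dist by simp
  then have "link E v = {{a,b},{c,d}} \<or> link E v = {{a,c},{b,d}} \<or> link E v = {{a,d},{b,c}}"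
    using link_pairs[OF assms(1) equalityD1[OF W(1)]] cover
      J4_free_link_claw_free[OF assms(4) equalityD2[OF W(1)] W(2) K4]
      C5_free_link_P4_free[OF assms(3) equalityD2[OF W(1)] W(2) K4]
    by (rule perfect_matching_of_four_vertices)
  moreover have "distinct [a,c,b,d,v]" "distinct [a,d,b,c,v]" using dist by auto
  ultimately have "hg_isomorphic V ({e. e \<subseteq> ?W \<and> card e = 3} \<union> insert v ` link E v) H4_V H4_E"
    using K4_plus_matching_iso_H4[OF dist] K4_plus_matching_iso_H4[of a c b d v]
      K4_plus_matching_iso_H4[of a d b c v]
    unfolding V by (elim disjE) (simp_all add: insert_commute)
  then show ?thesis using edges_eq_triples_un_link[OF assms(1) W K4] by metis
qed

end
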